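(* Let $w=w_1\cdots w_n$ be a word of length $n\ge 2$ such that each letter occurs at most $n/4$ times in $w$. Then $f(w)=n+2$. Moreover, for infinitely many $n\ge 2$ there exists a word $w$ of length $n$ in which every letter occurs at most $1+n/4$ times and such that $f(w)>n+2$.
   Context: A word of length $n$ is a sequence $w=w_1w_2\cdots w_n$ of letters (symbols). Let $[n]=\{1,\dots,n\}$. An $n$-grid is a function $G:[n]^2\to\Sigma$, where $\Sigma$ is an arbitrary set of letters. The $i$th row of $G$ contains $w$ if $G(i,j)=w_j$ for all $1\le j\le n$, or $G(i,j)=w_{n-j+1}$ for all $1\le j\le n$. The $j$th column contains $w$ if $G(i,j)=w_i$ for all $i$, or $G(i,j)=w_{n-i+1}$ for all $i$. The main diagonal contains $w$ if $G(i,i)=w_i$ for all $i$ or $G(i,i)=w_{n-i+1}$ for all $i$; the anti-diagonal contains $w$ if $G(i,n-i+1)=w_i$ for all $i$ or $G(i,n-i+1)=w_{n-i+1}$ for all $i$. Let $f(w,G)$ be the number of the $2n+2$ lines ($n$ rows, $n$ columns, $2$ diagonals) of $G$ that contain $w$, and $f(w)=\max_G f(w,G)$ over all $n$-grids $G$. *)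

theory Defs
  imports Main
begin

text \<open>A word of length n is a list w; letter w_k (1-based) is w ! (k - 1).
  An n-grid is G :: nat \<Rightarrow> nat \<Rightarrow> 'a, of which only the values on {1..n} x {1..n} matter.\<close>

definition row_contains :: "'a list \<Rightarrow> (nat \<Rightarrow> nat \<Rightarrow> 'a) \<Rightarrow> nat \<Rightarrow> bool" where
  "row_contains w G i \<longleftrightarrow>
     (\<forall>j\<in>{1..length w}. G i j = w ! (j - 1)) \<or>
     (\<forall>j\<in>{1..length w}. G i j = w ! (length w - j))"

definition col_contains :: "'a list \<Rightarrow> (nat \<Rightarrow> nat \<Rightarrow> 'a) \<Rightarrow> nat \<Rightarrow> bool" where
  "col_contains w G j \<longleftrightarrow>
     (\<forall>i\<in>{1..length w}. G i j = w ! (i - 1)) \<or>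
     (\<forall>i\<in>{1..length w}. G i j = w ! (length w - i))"

definition diag_contains :: "'a list \<Rightarrow> (nat \<Rightarrow> nat \<Rightarrow> 'a) \<Rightarrow> bool" where
  "diag_contains w G \<longleftrightarrow>
     (\<forall>i\<in>{1..length w}. G i i = w ! (i - 1)) \<or>
     (\<forall>i\<in>{1..length w}. G i i = w ! (length w - i))"

definition anti_contains :: "'a list \<Rightarrow> (nat \<Rightarrow> nat \<Rightarrow> 'a) \<Rightarrow> bool" where
  "anti_contains w G \<longleftrightarrow>
     (\<forall>i\<in>{1..length w}. G i (length w - i + 1) = w ! (i - 1)) \<or>
     (\<forall>i\<in>{1..length w}. G i (length w - i + 1) = w ! (length w - i))"

definition lines_count :: "'a list \<Rightarrow> (nat \<Rightarrow> nat \<Rightarrow> 'a) \<Rightarrow> nat" where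
  "lines_count w G =
     card {i \<in> {1..length w}. row_contains w G i}
   + card {j \<in> {1..length w}. col_contains w G j}
   + (if diag_contains w G then 1 else 0)
   + (if anti_contains w G then 1 else 0)"

text \<open>f(w) = max over all grids (the values are bounded by 2n+2, so the Max exists).\<close>
definition fmax :: "'a list \<Rightarrow> nat" where
  "fmax w = Max (range (lines_count w))"

end

theory Submission
  imports Defs "HOL-Library.Infinite_Set"
begin

text \<open>Let \<open>n = length w\<close>. If column \<open>j\<close> contains \<open>w\<close>, every row containing \<open>w\<close> meets it in
  one of the two letters \<open>w ! (j - 1)\<close>, \<open>w ! (n - j)\<close>; since the column reads \<open>w\<close>, at most
  \<open>n/4 + n/4\<close> of its entries are such letters. So if some row and some column contain \<open>w\<close>, at
  most \<open>n/2\<close> rows and \<open>n/2\<close> columns do, and in any case at most \<open>n\<close> rows and columns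
  together; the grid all of whose rows are \<open>w\<close> attains \<open>n + 2\<close>.

  For \<open>n = 4k\<close>, let \<open>w\<close> consist of \<open>k + 1\<close> zeros, \<open>2k - 2\<close> distinct letters and \<open>k + 1\<close> ones.
  Writing \<open>w\<close> into the first and last \<open>k + 1\<close> rows (the last ones reversed) and likewise into
  the first and last \<open>k + 1\<close> columns is consistent, because \<open>w\<close> is constant on its first and
  last \<open>k + 1\<close> letters; this gives \<open>4k + 4\<close> lines.\<close>

definition line_word :: "nat \<Rightarrow> (nat \<Rightarrow> 'a) \<Rightarrow> 'a list" where
  "line_word n f = map f [1..<Suc n]"

lemma length_line_word [simp]: "length (line_word n f) = n"
  by (simp add: line_word_def)

lemma nth_line_word [simp]: "k < n \<Longrightarrow> line_word n f ! k = f (Suc k)"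
  by (simp add: line_word_def del: upt_Suc)

lemma line_word_cong: "(\<And>j. j \<in> {1..n} \<Longrightarrow> f j = g j) \<Longrightarrow> line_word n f = line_word n g"
  by (rule nth_equalityI) simp_all

lemma line_word_reflect: "line_word n (\<lambda>j. f (Suc n - j)) = rev (line_word n f)"
proof (rule nth_equalityI)
  fix k assume "k < length (line_word n (\<lambda>j. f (Suc n - j)))"
  then show "line_word n (\<lambda>j. f (Suc n - j)) ! k = rev (line_word n f) ! k"
    by (simp add: rev_nth Suc_diff_Suc)
qed simp

lemma ball_atLeastAtMost_1_iff: "(\<forall>j\<in>{1..n}. P j) \<longleftrightarrow> (\<forall>k<n. P (Suc k))"
proof
  assume "\<forall>j\<in>{1..n}. P j"
  then show "\<forall>k<n. P (Suc k)" by simp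
next
  assume P: "\<forall>k<n. P (Suc k)"
  show "\<forall>j\<in>{1..n}. P j"
  proof
    fix j assume "j \<in> {1..n}"
    then obtain k where "j = Suc k" "k < n" by (cases j) auto
    then show "P j" using P by simp
  qed
qed

lemma line_word_eq_iff:
  "line_word (length w) f = w \<longleftrightarrow> (\<forall>j\<in>{1..length w}. f j = w ! (j - 1))"
  unfolding ball_atLeastAtMost_1_iff by (simp add: list_eq_iff_nth_eq)

lemma line_word_eq_rev_iff:
  "line_word (length w) f = rev w \<longleftrightarrow> (\<forall>j\<in>{1..length w}. f j = w ! (length w - j))"
  unfolding ball_atLeastAtMost_1_iff by (simp add: list_eq_iff_nth_eq rev_nth)

lemma reads_iff_line_word:
  "(\<forall>j\<in>{1..length w}. f j = w ! (j - 1)) \<or> (\<forall>j\<in>{1..length w}. f j = w ! (length w - j))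
     \<longleftrightarrow> line_word (length w) f \<in> {w, rev w}"
  by (simp add: line_word_eq_iff line_word_eq_rev_iff)

lemma row_contains_iff_line_word: "row_contains w G i \<longleftrightarrow> line_word (length w) (G i) \<in> {w, rev w}"
  unfolding row_contains_def by (rule reads_iff_line_word)

lemma col_contains_iff_line_word:
  "col_contains w G j \<longleftrightarrow> line_word (length w) (\<lambda>i. G i j) \<in> {w, rev w}"
  unfolding col_contains_def by (rule reads_iff_line_word)

lemma card_line_word_filter:
  "card {k \<in> {1..n}. f k \<in> A} = length (filter (\<lambda>a. a \<in> A) (line_word n f))"
proof -
  have "length (filter (\<lambda>a. a \<in> A) (line_word n f)) = length (filter (\<lambda>k. f k \<in> A) [1..<Suc n])"
    by (simp add: line_word_def comp_def del: upt_Suc)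
  also have "\<dots> = card ({k. f k \<in> A} \<inter> {1..n})"
    by (simp add: distinct_length_filter atLeastLessThanSuc_atLeastAtMost del: upt_Suc)
  also have "{k. f k \<in> A} \<inter> {1..n} = {k \<in> {1..n}. f k \<in> A}"
    by blast
  finally show ?thesis by (rule sym)
qed

lemma length_filter_pair_le:
  "length (filter (\<lambda>a. a \<in> {x, y}) w) \<le> count_list w x + count_list w y"
  by (induction w) auto

lemma count_list_line_word: "count_list (line_word n f) a = card {k \<in> {1..n}. f k = a}"
proof -
  have "count_list xs a = length (filter (\<lambda>x. x \<in> {a}) xs)" for xs :: "'a list"
    by (induction xs) auto
  then show ?thesis using card_line_word_filter[of n f "{a}"] by simp
qed

lemma row_contains_transpose: "row_contains w (\<lambda>i j. G j i) i \<longleftrightarrow> col_contains w G i"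
  unfolding row_contains_def col_contains_def ..

lemma col_contains_transpose: "col_contains w (\<lambda>i j. G j i) j \<longleftrightarrow> row_contains w G j"
  unfolding row_contains_def col_contains_def ..

lemma card_rows_le_half:
  assumes balanced: "\<forall>a. 4 * count_list w a \<le> length w"
    and col: "col_contains w G j" and j: "j \<in> {1..length w}"
  shows "2 * card {i \<in> {1..length w}. row_contains w G i} \<le> length w"
proof -
  define x y where "x = w ! (j - 1)" and "y = w ! (length w - j)"
  have "{i \<in> {1..length w}. row_contains w G i} \<subseteq> {i \<in> {1..length w}. G i j \<in> {x, y}}"
    using j by (auto simp: row_contains_def x_def y_def)
  then have "card {i \<in> {1..length w}. row_contains w G i} \<le> card {i \<in> {1..length w}. G i j \<in> {x, y}}"
    by (intro card_mono) auto
  also have "\<dots> = length (filter (\<lambda>a. a \<in> {x, y}) (line_word (length w) (\<lambda>i. G i j)))"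
    by (rule card_line_word_filter)
  also have "\<dots> = length (filter (\<lambda>a. a \<in> {x, y}) w)"
    using col by (auto simp: col_contains_iff_line_word rev_filter[symmetric])
  also have "\<dots> \<le> count_list w x + count_list w y"
    by (rule length_filter_pair_le)
  finally show ?thesis
    using balanced[rule_format, of x] balanced[rule_format, of y] by linarith
qed

lemma card_cols_le_half:
  assumes "\<forall>a. 4 * count_list w a \<le> length w"
    and "row_contains w G i" and "i \<in> {1..length w}"
  shows "2 * card {j \<in> {1..length w}. col_contains w G j} \<le> length w"
proof -
  have "col_contains w (\<lambda>i j. G j i) i"
    using assms(2) by (simp only: col_contains_transpose)
  from card_rows_le_half[OF assms(1) this assms(3)] show ?thesis
    by (simp only: row_contains_transpose)
qed

lemma card_Collect_atLeastAtMost_le: "card {i \<in> {1..n}. P i} \<le> n"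
proof -
  have "card {i \<in> {1..n}. P i} \<le> card {1..n}"
    by (rule card_mono) auto
  then show ?thesis by simp
qed

lemma lines_count_le: "lines_count w G \<le> 2 * length w + 2"
  using card_Collect_atLeastAtMost_le[of "length w" "row_contains w G"]
    card_Collect_atLeastAtMost_le[of "length w" "col_contains w G"]
  unfolding lines_count_def by simp

lemma lines_count_le_balanced:
  assumes balanced: "\<forall>a. 4 * count_list w a \<le> length w"
  shows "lines_count w G \<le> length w + 2"
proof -
  define R where "R = {i \<in> {1..length w}. row_contains w G i}"
  define C where "C = {j \<in> {1..length w}. col_contains w G j}"
  have "card R \<le> length w" and "card C \<le> length w"
    unfolding R_def C_def by (rule card_Collect_atLeastAtMost_le)+
  have "card R + card C \<le> length w"
  proof (cases "R = {} \<or> C = {}")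
    case True
    then show ?thesis
      using \<open>card R \<le> length w\<close> \<open>card C \<le> length w\<close> by auto
  next
    case False
    then obtain i j where "i \<in> R" and "j \<in> C" by blast
    then have "2 * card R \<le> length w" and "2 * card C \<le> length w"
      using card_rows_le_half[OF balanced] card_cols_le_half[OF balanced]
      unfolding R_def C_def by auto
    then show ?thesis by linarith
  qed
  then show ?thesis unfolding lines_count_def R_def C_def by simp
qed

lemma lines_count_word_rows: "length w + 2 \<le> lines_count w (\<lambda>_ j. w ! (j - 1))"
proof -
  have "{i \<in> {1..length w}. row_contains w (\<lambda>_ j. w ! (j - 1)) i} = {1..length w}"
    by (auto simp: row_contains_def)
  moreover have "diag_contains w (\<lambda>_ j. w ! (j - 1))"
    by (simp add: diag_contains_def)
  moreover have "anti_contains w (\<lambda>_ j. w ! (j - 1))"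
    by (simp add: anti_contains_def)
  ultimately show ?thesis unfolding lines_count_def by simp
qed

lemma finite_range_lines_count: "finite (range (lines_count w))"
  by (rule finite_subset[of _ "{..2 * length w + 2}"]) (use lines_count_le in auto)

lemma lines_count_le_fmax: "lines_count w G \<le> fmax w"
  unfolding fmax_def by (rule Max_ge[OF finite_range_lines_count]) simp

lemma fmax_eqI:
  assumes "\<And>G. lines_count w G \<le> m" and "m \<le> lines_count w G\<^sub>0"
  shows "fmax w = m"
  unfolding fmax_def
proof (rule Max_eqI[OF finite_range_lines_count])
  show "m \<in> range (lines_count w)"
    using assms le_antisym by blast
qed (use assms(1) in auto)

lemma fmax_balanced:
  assumes "\<forall>a. 4 * count_list w a \<le> length w"
  shows "fmax w = length w + 2"
  by (rule fmax_eqI[OF lines_count_le_balanced[OF assms] lines_count_word_rows])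

definition band_letter :: "nat \<Rightarrow> nat \<Rightarrow> nat" where
  "band_letter k j = (if j \<le> k + 1 then 0 else if 3 * k \<le> j then 1 else j)"

definition band_word :: "nat \<Rightarrow> nat list" where
  "band_word k = line_word (4 * k) (band_letter k)"

definition band_grid :: "nat \<Rightarrow> nat \<Rightarrow> nat \<Rightarrow> nat" where
  "band_grid k i j =
     (if i \<le> k + 1 then band_letter k j
      else if 3 * k \<le> i then band_letter k (Suc (4 * k) - j)
      else if j \<le> k + 1 then band_letter k i
      else if 3 * k \<le> j then band_letter k (Suc (4 * k) - i)
      else 0)"

lemma length_band_word [simp]: "length (band_word k) = 4 * k"
  by (simp add: band_word_def)

lemma count_list_band_word: "4 * count_list (band_word k) a \<le> 4 + 4 * k"
proof -
  let ?occ = "{j \<in> {1..4 * k}. band_letter k j = a}"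
  consider "a = 0" | "a = 1" | "2 \<le> a" by linarith
  then have "card ?occ \<le> k + 1"
  proof cases
    case 1
    then have "?occ \<subseteq> {1..k + 1}" by (auto simp: band_letter_def split: if_splits)
    from card_mono[OF _ this] show ?thesis by simp
  next
    case 2
    then have "?occ \<subseteq> {3 * k..4 * k}" by (auto simp: band_letter_def split: if_splits)
    from card_mono[OF _ this] show ?thesis by simp
  next
    case 3
    then have "?occ \<subseteq> {a}" by (auto simp: band_letter_def split: if_splits)
    from card_mono[OF _ this] show ?thesis by simp
  qed
  then show ?thesis by (simp add: band_word_def count_list_line_word)
qed

lemma band_grid_row:
  assumes "1 \<le> k" and "i \<in> {1..k + 1} \<union> {3 * k..4 * k}"
  shows "row_contains (band_word k) (band_grid k) i"
proof (cases "i \<le> k + 1")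
  case True
  then have "band_grid k i = band_letter k"
    by (simp add: band_grid_def fun_eq_iff)
  then show ?thesis by (simp add: row_contains_iff_line_word band_word_def)
next
  case False
  with assms have "band_grid k i = (\<lambda>j. band_letter k (Suc (4 * k) - j))"
    by (auto simp: band_grid_def fun_eq_iff)
  then show ?thesis by (simp add: row_contains_iff_line_word band_word_def line_word_reflect)
qed

lemma band_grid_col:
  assumes "1 \<le> k" and "j \<in> {1..k + 1} \<union> {3 * k..4 * k}"
  shows "col_contains (band_word k) (band_grid k) j"
proof (cases "j \<le> k + 1")
  case True
  have "line_word (4 * k) (\<lambda>i. band_grid k i j) = line_word (4 * k) (band_letter k)"
    by (rule line_word_cong) (use True assms in \<open>auto simp: band_grid_def band_letter_def\<close>)
  then show ?thesis by (simp add: col_contains_iff_line_word band_word_def)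
next
  case False
  have "line_word (4 * k) (\<lambda>i. band_grid k i j) = line_word (4 * k) (\<lambda>i. band_letter k (Suc (4 * k) - i))"
    by (rule line_word_cong) (use False assms in \<open>auto simp: band_grid_def band_letter_def\<close>)
  then show ?thesis by (simp add: col_contains_iff_line_word band_word_def line_word_reflect)
qed

lemma lines_count_band_grid:
  assumes "1 \<le> k"
  shows "4 * k + 4 \<le> lines_count (band_word k) (band_grid k)"
proof -
  define S where "S = {1..k + 1} \<union> {3 * k..4 * k}"
  have "card S = 2 * k + 2"
    unfolding S_def using assms by (subst card_Un_disjoint) auto
  moreover have "card S \<le> card {i \<in> {1..4 * k}. row_contains (band_word k) (band_grid k) i}"
    by (rule card_mono) (use assms band_grid_row in \<open>auto simp: S_def\<close>)
  moreover have "card S \<le> card {j \<in> {1..4 * k}. col_contains (band_word k) (band_grid k) j}"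
    by (rule card_mono) (use assms band_grid_col in \<open>auto simp: S_def\<close>)
  ultimately show ?thesis unfolding lines_count_def by simp
qed

lemma fmax_band_word_gt:
  assumes "1 \<le> k"
  shows "4 * k + 2 < fmax (band_word k)"
  using lines_count_band_grid[OF assms] lines_count_le_fmax[of "band_word k" "band_grid k"]
  by linarith

theorem theorem1:
  shows "(\<forall>w :: 'a list. length w \<ge> 2 \<longrightarrow>
            (\<forall>a. 4 * count_list w a \<le> length w) \<longrightarrow> fmax w = length w + 2)
       \<and> infinite {n :: nat. n \<ge> 2 \<and> (\<exists>w :: nat list. length w = n \<and>
            (\<forall>a. 4 * count_list w a \<le> 4 + n) \<and> fmax w > n + 2)}"
    (is "?balanced \<and> infinite ?N")
proof
  show ?balanced
    using fmax_balanced by blast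
  show "infinite ?N"
    unfolding infinite_nat_iff_unbounded_le
  proof
    fix m :: nat
    have "4 * Suc m \<in> ?N"
      using fmax_band_word_gt[of "Suc m"] count_list_band_word[of "Suc m"]
      by (auto intro!: exI[of _ "band_word (Suc m)"])
    then show "\<exists>n\<ge>m. n \<in> ?N" by (intro exI[of _ "4 * Suc m"]) auto
  qed
qed

end
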